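(* Let $G=(V,E)$ be an undirected graph with $m$ edges and positive capacities $u_e$, let $0<\epsilon<1/7$, $\rho>0$, $F>0$, and let $w\in\mathbb{R}_{>0}^E$ with $\mu=\sum_e w_e$. Set $r_e=w_e/u_e^2$ and suppose $R_{\mathrm{eff}}(r)\le(1-7\epsilon)\mu/F^2$. Let $\tilde f$ be an $s$-$t$ flow of value $F$ with $\mathcal{E}_r(\tilde f)\le(1+\epsilon^2)F^2R_{\mathrm{eff}}(r)$. Define $w'_e=w_e+\frac{\epsilon}{\rho}\,\mathrm{cong}_{\tilde f}(e)\,w_e+\frac{\epsilon^2}{m\rho}\mu$ and $\mu'=\sum_e w'_e$. Then $\mu'\le\mu\exp\!\big(\frac{\epsilon(1-2\epsilon)}{\rho}\big)$.
   Context: Edges are arbitrarily oriented; an $s$-$t$ flow is $f:E\to\mathbb{R}$ conserving flow at all vertices other than $s,t$, with value the net flow out of $s$. $\mathrm{cong}_f(e)=|f(e)|/u_e$. $\mathcal{E}_r(f)=\sum_e r_e f(e)^2$. The effective $s$-$t$ resistance $R_{\mathrm{eff}}(r)$ is the minimum of $\mathcal{E}_r$ over $s$-$t$ flows of value $1$, so the electrical flow of value $F$ has energy $F^2R_{\mathrm{eff}}(r)$. *)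

theory Defs
  imports Complex_Main
begin

text \<open>An undirected (multi)graph is given by a vertex set V, an edge set E and, for
each edge, two endpoints src e and dst e; this fixes an arbitrary orientation of
each edge (from src e to dst e). A flow assigns a real f e to each edge; positive
values mean flow from src e to dst e.\<close>

definition net_out :: "'e set \<Rightarrow> ('e \<Rightarrow> 'v) \<Rightarrow> ('e \<Rightarrow> 'v) \<Rightarrow> ('e \<Rightarrow> real) \<Rightarrow> 'v \<Rightarrow> real" where
  "net_out E src dst f v =
     (\<Sum>e\<in>E. if src e = v then f e else 0) - (\<Sum>e\<in>E. if dst e = v then f e else 0)"

definition is_st_flow :: "'v set \<Rightarrow> 'e set \<Rightarrow> ('e \<Rightarrow> 'v) \<Rightarrow> ('e \<Rightarrow> 'v) \<Rightarrow> 'v \<Rightarrow> 'v \<Rightarrow> ('e \<Rightarrow> real) \<Rightarrow> bool" where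
  "is_st_flow V E src dst s t f \<longleftrightarrow> (\<forall>v\<in>V. v \<noteq> s \<and> v \<noteq> t \<longrightarrow> net_out E src dst f v = 0)"

definition flow_value :: "'e set \<Rightarrow> ('e \<Rightarrow> 'v) \<Rightarrow> ('e \<Rightarrow> 'v) \<Rightarrow> 'v \<Rightarrow> ('e \<Rightarrow> real) \<Rightarrow> real" where
  "flow_value E src dst s f = net_out E src dst f s"

definition cong :: "('e \<Rightarrow> real) \<Rightarrow> ('e \<Rightarrow> real) \<Rightarrow> 'e \<Rightarrow> real" where
  "cong u f e = \<bar>f e\<bar> / u e"

definition energy :: "'e set \<Rightarrow> ('e \<Rightarrow> real) \<Rightarrow> ('e \<Rightarrow> real) \<Rightarrow> real" where
  "energy E r f = (\<Sum>e\<in>E. r e * (f e)\<^sup>2)"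

definition R_eff :: "'v set \<Rightarrow> 'e set \<Rightarrow> ('e \<Rightarrow> 'v) \<Rightarrow> ('e \<Rightarrow> 'v) \<Rightarrow> 'v \<Rightarrow> 'v \<Rightarrow> ('e \<Rightarrow> real) \<Rightarrow> real" where
  "R_eff V E src dst s t r =
     Inf {energy E r f | f. is_st_flow V E src dst s t f \<and> flow_value E src dst s f = 1}"

end

theory Submission
  imports Defs
begin

text \<open>With resistances r e = w e / (u e)^2 the energy of a flow f equals the weighted sum
  of squared congestions, \<Sum> w e * cong(e)^2.  The hypotheses on f and on R_eff bound
  this energy by (1+\<epsilon>^2)(1-7\<epsilon>) \<mu>, which is at most (1-3\<epsilon>)^2 \<mu>.  A weighted
  AM-GM averaging argument turns a bound c^2 \<mu> on the weighted mean of squares into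
  the bound c \<mu> on the weighted mean \<Sum> w e * cong(e) itself.  Finally the new total
  weight is \<mu> + (\<epsilon>/\<rho>) \<Sum> w e cong(e) + (\<epsilon>^2/\<rho>) \<mu> \<le> \<mu> (1 + \<epsilon>(1-2\<epsilon>)/\<rho>), and
  1 + x \<le> exp x finishes the proof.\<close>

lemma energy_eq_weighted_cong_squares:
  "energy E (\<lambda>e. w e / (u e)\<^sup>2) f = (\<Sum>e\<in>E. w e * (cong u f e)\<^sup>2)"
  unfolding energy_def cong_def
  by (rule sum.cong) (auto simp: power_divide power2_abs)

lemma near_optimality_slack:
  fixes \<epsilon> :: real
  assumes "0 \<le> \<epsilon>"
  shows "(1 + \<epsilon>\<^sup>2) * (1 - 7*\<epsilon>) \<le> (1 - 3*\<epsilon>)\<^sup>2"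
proof -
  have "(1 - 3*\<epsilon>)\<^sup>2 - (1 + \<epsilon>\<^sup>2) * (1 - 7*\<epsilon>) = \<epsilon> + 8*\<epsilon>\<^sup>2 + 7*\<epsilon>^3"
    by (simp add: power2_eq_square power3_eq_cube algebra_simps)
  moreover have "0 \<le> \<epsilon> + 8*\<epsilon>\<^sup>2 + 7*\<epsilon>^3" using assms by simp
  ultimately show ?thesis by linarith
qed

text \<open>Pointwise, x \<le> c/2 + x^2/(2c) by AM-GM; summing with weights w gives the claim.\<close>
lemma weighted_sum_le_from_squares:
  fixes w x :: "'a \<Rightarrow> real" and c :: real
  assumes w_nonneg: "\<forall>e\<in>E. 0 \<le> w e" and c_pos: "0 < c"
    and squares: "(\<Sum>e\<in>E. w e * (x e)\<^sup>2) \<le> c\<^sup>2 * (\<Sum>e\<in>E. w e)"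
  shows "(\<Sum>e\<in>E. w e * x e) \<le> c * (\<Sum>e\<in>E. w e)"
proof -
  have am_gm: "x e \<le> c/2 + (x e)\<^sup>2 / (2*c)" for e
  proof -
    have "2*c*x e \<le> c\<^sup>2 + (x e)\<^sup>2"
      using sum_squares_ge_zero[of "x e - c" 0] by (simp add: power2_eq_square algebra_simps)
    thus ?thesis using c_pos by (simp add: field_simps power2_eq_square)
  qed
  have "(\<Sum>e\<in>E. w e * x e) \<le> (\<Sum>e\<in>E. w e * (c/2 + (x e)\<^sup>2 / (2*c)))"
    by (rule sum_mono) (use w_nonneg am_gm in \<open>simp add: mult_left_mono\<close>)
  also have "\<dots> = c/2 * (\<Sum>e\<in>E. w e) + (\<Sum>e\<in>E. w e * (x e)\<^sup>2) / (2*c)"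
    by (simp add: algebra_simps sum.distrib sum_distrib_left sum_divide_distrib)
  also have "\<dots> \<le> c/2 * (\<Sum>e\<in>E. w e) + c\<^sup>2 * (\<Sum>e\<in>E. w e) / (2*c)"
    using squares c_pos by (simp add: divide_right_mono)
  also have "\<dots> = c * (\<Sum>e\<in>E. w e)"
    using c_pos by (simp add: field_simps power2_eq_square)
  finally show ?thesis .
qed

lemma updated_weight_sum:
  fixes w c :: "'e \<Rightarrow> real" and \<epsilon> \<rho> :: real
  assumes "finite E" and "E \<noteq> {}"
  shows "(\<Sum>e\<in>E. w e + (\<epsilon> / \<rho>) * c e * w e
                    + \<epsilon>\<^sup>2 / (real (card E) * \<rho>) * (\<Sum>e'\<in>E. w e'))
       = (\<Sum>e\<in>E. w e) + (\<epsilon>/\<rho>) * (\<Sum>e\<in>E. w e * c e) + \<epsilon>\<^sup>2/\<rho> * (\<Sum>e\<in>E. w e)"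
proof -
  have "real (card E) > 0" using assms by (simp add: card_gt_0_iff)
  thus ?thesis by (simp add: sum.distrib sum_distrib_left algebra_simps)
qed

theorem lemma5p4:
  fixes V :: "'v set" and E :: "'e set" and src dst :: "'e \<Rightarrow> 'v" and s t :: 'v
    and u w f :: "'e \<Rightarrow> real" and \<epsilon> \<rho> F :: real
  assumes "finite V" and "finite E"
    and "\<forall>e\<in>E. src e \<in> V \<and> dst e \<in> V"
    and "s \<in> V" and "t \<in> V" and "s \<noteq> t"
    and "\<forall>e\<in>E. u e > 0"
    and "0 < \<epsilon>" and "\<epsilon> < 1/7" and "\<rho> > 0" and "F > 0"
    and "\<forall>e\<in>E. w e > 0"
    and "R_eff V E src dst s t (\<lambda>e. w e / (u e)\<^sup>2) \<le> (1 - 7*\<epsilon>) * (\<Sum>e\<in>E. w e) / F\<^sup>2"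
    and "is_st_flow V E src dst s t f" and "flow_value E src dst s f = F"
    and "energy E (\<lambda>e. w e / (u e)\<^sup>2) f
           \<le> (1 + \<epsilon>\<^sup>2) * F\<^sup>2 * R_eff V E src dst s t (\<lambda>e. w e / (u e)\<^sup>2)"
  shows "(\<Sum>e\<in>E. w e + (\<epsilon> / \<rho>) * cong u f e * w e
                    + \<epsilon>\<^sup>2 / (real (card E) * \<rho>) * (\<Sum>e'\<in>E. w e'))
         \<le> (\<Sum>e\<in>E. w e) * exp (\<epsilon> * (1 - 2*\<epsilon>) / \<rho>)"
proof (cases "E = {}")
  case True thus ?thesis by simp
next
  case False
  define \<mu> where "\<mu> = (\<Sum>e\<in>E. w e)"
  have w_nonneg: "\<forall>e\<in>E. 0 \<le> w e" using assms(12) by (simp add: less_imp_le)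
  have mu_nonneg: "0 \<le> \<mu>" unfolding \<mu>_def using w_nonneg by (simp add: sum_nonneg)
  have "(\<Sum>e\<in>E. w e * (cong u f e)\<^sup>2) \<le> (1 + \<epsilon>\<^sup>2) * F\<^sup>2 * ((1 - 7*\<epsilon>) * \<mu> / F\<^sup>2)"
    using assms(16) mult_left_mono[OF assms(13), of "(1 + \<epsilon>\<^sup>2) * F\<^sup>2"]
    by (simp add: energy_eq_weighted_cong_squares \<mu>_def)
  also have "\<dots> = (1 + \<epsilon>\<^sup>2) * (1 - 7*\<epsilon>) * \<mu>" using assms(11) by simp
  also have "\<dots> \<le> (1 - 3*\<epsilon>)\<^sup>2 * \<mu>"
    using near_optimality_slack assms(8) mu_nonneg by (simp add: mult_right_mono)
  finally have "(\<Sum>e\<in>E. w e * cong u f e) \<le> (1 - 3*\<epsilon>) * \<mu>"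
    unfolding \<mu>_def using weighted_sum_le_from_squares[OF w_nonneg] assms(9) by simp
  hence "(\<Sum>e\<in>E. w e + (\<epsilon> / \<rho>) * cong u f e * w e
                    + \<epsilon>\<^sup>2 / (real (card E) * \<rho>) * (\<Sum>e'\<in>E. w e'))
         \<le> \<mu> + (\<epsilon>/\<rho>) * ((1 - 3*\<epsilon>) * \<mu>) + \<epsilon>\<^sup>2/\<rho> * \<mu>"
    using updated_weight_sum[OF assms(2) False] assms(8,10)
    by (simp add: \<mu>_def mult_left_mono divide_right_mono)
  also have "\<dots> = \<mu> * (1 + \<epsilon> * (1 - 2*\<epsilon>) / \<rho>)"
    using assms(10) by (simp add: field_simps power2_eq_square)
  also have "\<dots> \<le> \<mu> * exp (\<epsilon> * (1 - 2*\<epsilon>) / \<rho>)"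
    using mu_nonneg by (simp add: mult_left_mono exp_ge_add_one_self)
  finally show ?thesis unfolding \<mu>_def .
qed

end
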